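(* Let $\alpha>0$ be non-integer, $n=\lfloor\alpha\rfloor+1$, and $a,b\in\mathbb{R}$ with $a<b$ and $b\equiv a\pmod 1$. If $f$ is defined on ${}_{b}\mathbb{N}$ and $g$ is defined on $\mathbb{N}_a$, then $$\sum_{s=a+1}^{b-1}f(s)\,(\Delta_{a+1}^{\alpha}g)(s-\alpha)=\sum_{s=a+1}^{b-1}g(s)\,({}_{b-1}\Delta^{\alpha}f)(s+\alpha).$$
   Context: Notation: $\mathbb{N}_a=\{a,a+1,\dots\}$, ${}_{b}\mathbb{N}=\{b,b-1,\dots\}$, $\sigma(t)=t+1$, $\Delta h(t)=h(t+1)-h(t)$, $\nabla h(t)=h(t)-h(t-1)$. Falling factorial $t^{(\beta)}=\Gamma(t+1)/\Gamma(t+1-\beta)$ (division at a pole gives $0$). Delta left fractional sum: $\Delta_c^{-\gamma}h(t)=\frac{1}{\Gamma(\gamma)}\sum_{s=c}^{t-\gamma}(t-\sigma(s))^{(\gamma-1)}h(s)$; delta left fractional difference: $\Delta_c^{\alpha}h(t)=\Delta^n\Delta_c^{-(n-\alpha)}h(t)$. Delta right fractional sum: ${}_{c}\Delta^{-\gamma}h(t)=\frac{1}{\Gamma(\gamma)}\sum_{s=t+\gamma}^{c}(s-\sigma(t))^{(\gamma-1)}h(s)$; delta right fractional difference: ${}_{c}\Delta^{\alpha}h(t)=(-1)^n\nabla^n\,{}_{c}\Delta^{-(n-\alpha)}h(t)$. Sums with upper limit smaller than lower limit are $0$ (in particular fractional sums evaluated at points beyond their starting/ending point are $0$). *)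

theory Defs
  imports "HOL-Analysis.Analysis"
begin

(* Sum over the lattice lo, lo+1, ..., hi (hi - lo an integer); empty (= 0) if hi < lo. *)
definition dsum :: "real \<Rightarrow> real \<Rightarrow> (real \<Rightarrow> real) \<Rightarrow> real" where
  "dsum lo hi h = (\<Sum>k\<in>{0..<nat (\<lfloor>hi - lo\<rfloor> + 1)}. h (lo + real k))"

(* falling factorial t^(beta) = Gamma(t+1)/Gamma(t+1-beta); Gamma at a pole is 0 and x/0 = 0 *)
definition ffact :: "real \<Rightarrow> real \<Rightarrow> real" where
  "ffact t \<beta> = Gamma (t + 1) / Gamma (t + 1 - \<beta>)"

definition fdiff :: "(real \<Rightarrow> real) \<Rightarrow> real \<Rightarrow> real" where
  "fdiff h t = h (t + 1) - h t"

definition bdiff :: "(real \<Rightarrow> real) \<Rightarrow> real \<Rightarrow> real" where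
  "bdiff h t = h t - h (t - 1)"

definition lfsum :: "real \<Rightarrow> real \<Rightarrow> (real \<Rightarrow> real) \<Rightarrow> real \<Rightarrow> real" where
  "lfsum c \<gamma> h t = (1 / Gamma \<gamma>) * dsum c (t - \<gamma>) (\<lambda>s. ffact (t - (s + 1)) (\<gamma> - 1) * h s)"

definition lfdiff :: "real \<Rightarrow> real \<Rightarrow> nat \<Rightarrow> (real \<Rightarrow> real) \<Rightarrow> real \<Rightarrow> real" where
  "lfdiff c \<alpha> n h = (fdiff ^^ n) (lfsum c (real n - \<alpha>) h)"

definition rfsum :: "real \<Rightarrow> real \<Rightarrow> (real \<Rightarrow> real) \<Rightarrow> real \<Rightarrow> real" where
  "rfsum c \<gamma> h t = (1 / Gamma \<gamma>) * dsum (t + \<gamma>) c (\<lambda>s. ffact (s - (t + 1)) (\<gamma> - 1) * h s)"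

definition rfdiff :: "real \<Rightarrow> real \<Rightarrow> nat \<Rightarrow> (real \<Rightarrow> real) \<Rightarrow> real \<Rightarrow> real" where
  "rfdiff c \<alpha> n h t = (-1) ^ n * (bdiff ^^ n) (rfsum c (real n - \<alpha>) h) t"

end

theory Submission
  imports Defs
begin

(* Put x_k = a + 1 + k (0 <= k < M), so that b - 1 = x_(M-1), and let
   nu = n - alpha.  On the shifted lattices where they are evaluated, both the left
   fractional sum of g and the right fractional sum of f are finite sums over the grid
   against one kernel Phi_nu(x) = [nu <= x] x-1^(nu-1) / Gamma(nu):
     Delta_{a+1}^{-nu} g (t) = sum_k Phi_nu(t - x_k) g(x_k),
     _{b-1}Delta^{-nu} f (u) = sum_q Phi_nu(x_q - u) f(x_q).
   The iterated differences Delta^n and nabla^n act only on the kernel; since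
   nabla^n (u |-> Phi(x - u)) = (-1)^n (Delta^n Phi)(x - u), both fractional differences
   are given by the single kernel D = Delta^n Phi_nu:
     (Delta_{a+1}^alpha g)(x_i - alpha) = sum_k D(x_i - alpha - x_k) g(x_k),
     (_{b-1}Delta^alpha f)(x_k + alpha) = sum_i D(x_i - alpha - x_k) f(x_i).
   Both sides of the theorem are therefore the same double sum
   sum_i sum_k f(x_i) D(x_i - alpha - x_k) g(x_k), summed in the two orders. *)

lemma fdiff_pow_sum:
  "(fdiff ^^ n) (\<lambda>t. \<Sum>q\<in>Q. w q t * c q) = (\<lambda>t. \<Sum>q\<in>Q. (fdiff ^^ n) (w q) t * c q)"
  by (induction n) (auto simp: fdiff_def sum_subtractf left_diff_distrib)

lemma bdiff_pow_sum:
  "(bdiff ^^ n) (\<lambda>t. \<Sum>q\<in>Q. w q t * c q) = (\<lambda>t. \<Sum>q\<in>Q. (bdiff ^^ n) (w q) t * c q)"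
  by (induction n) (auto simp: bdiff_def sum_subtractf left_diff_distrib)

text \<open>The value of \<open>\<Delta>\<^sup>n h\<close> at \<open>t\<close> only depends on \<open>h\<close> at \<open>t, t+1, \<dots>, t+n\<close>;
  this lets us replace the fractional sums by their grid representations, which are
  valid only on the relevant lattice points.\<close>

lemma fdiff_pow_local:
  assumes "\<And>j. j \<le> n \<Longrightarrow> h (t + real j) = h' (t + real j)"
  shows "(fdiff ^^ n) h t = (fdiff ^^ n) h' t"
  using assms
proof (induction n arbitrary: t)
  case 0
  then show ?case by simp
next
  case (Suc n)
  have here: "(fdiff ^^ n) h t = (fdiff ^^ n) h' t"
    using Suc by auto
  have next_point: "(fdiff ^^ n) h (t + 1) = (fdiff ^^ n) h' (t + 1)"
    using Suc.IH[of "t + 1"] Suc.prems[of "Suc _"] by (simp add: algebra_simps)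
  have step: "(fdiff ^^ Suc n) k t = (fdiff ^^ n) k (t + 1) - (fdiff ^^ n) k t" for k
    by (simp add: fdiff_def)
  show ?case
    by (simp only: step here next_point)
qed

lemma bdiff_pow_local:
  assumes "\<And>j. j \<le> n \<Longrightarrow> h (t - real j) = h' (t - real j)"
  shows "(bdiff ^^ n) h t = (bdiff ^^ n) h' t"
  using assms
proof (induction n arbitrary: t)
  case 0
  then show ?case by simp
next
  case (Suc n)
  have here: "(bdiff ^^ n) h t = (bdiff ^^ n) h' t"
    using Suc by auto
  have prev_point: "(bdiff ^^ n) h (t - 1) = (bdiff ^^ n) h' (t - 1)"
    using Suc.IH[of "t - 1"] Suc.prems[of "Suc _"] by (simp add: algebra_simps)
  have step: "(bdiff ^^ Suc n) k t = (bdiff ^^ n) k t - (bdiff ^^ n) k (t - 1)" for k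
    by (simp add: bdiff_def)
  show ?case
    by (simp only: step here prev_point)
qed

lemma fdiff_pow_translate:
  "(fdiff ^^ n) (\<lambda>t. h (t - y)) = (\<lambda>t. (fdiff ^^ n) h (t - y))"
  by (induction n) (auto simp: fdiff_def algebra_simps)

lemma bdiff_pow_reflect:
  "(bdiff ^^ n) (\<lambda>u. h (s - u)) = (\<lambda>u. (-1) ^ n * (fdiff ^^ n) h (s - u))"
  by (induction n) (auto simp: fdiff_def bdiff_def algebra_simps)

lemma dsum_grid:
  "dsum c (c + real M - 1) h = (\<Sum>k<M. h (c + real k))"
proof -
  have "\<lfloor>c + real M - 1 - c\<rfloor> + 1 = int M"
    by simp
  then show ?thesis
    unfolding dsum_def by (simp add: atLeast0LessThan)
qed

text \<open>The kernel of the fractional sum of order \<open>\<nu>\<close>: the weight \<open>ffact (x - 1) (\<nu> - 1) / \<Gamma> \<nu>\<close>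
  with which a grid value at distance \<open>x\<close> enters, cut off below \<open>\<nu>\<close> where the sum stops.\<close>

definition frac_kernel :: "real \<Rightarrow> real \<Rightarrow> real" where
  "frac_kernel \<nu> x = (if \<nu> \<le> x then ffact (x - 1) (\<nu> - 1) / Gamma \<nu> else 0)"

text \<open>At a point \<open>t = c + m + \<nu>\<close> (\<open>m\<close> an integer below \<open>M\<close>) the left fractional sum starting
  at \<open>c\<close> is the kernel sum over the grid \<open>c, \<dots>, c+M-1\<close>: the terms with \<open>k > m\<close> vanish.\<close>

lemma lfsum_grid:
  fixes m :: int
  assumes "m < int M"
  shows "lfsum c \<nu> g (c + of_int m + \<nu>)
       = (\<Sum>k<M. frac_kernel \<nu> (c + of_int m + \<nu> - (c + real k)) * g (c + real k))"
proof -
  define t where "t = c + of_int m + \<nu>"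
  define N where "N = nat (m + 1)"
  have "\<lfloor>t - \<nu> - c\<rfloor> = m"
    unfolding t_def by simp
  then have dsum_N: "lfsum c \<nu> g t
      = (\<Sum>k<N. ffact (t - (c + real k + 1)) (\<nu> - 1) * g (c + real k) / Gamma \<nu>)"
    unfolding lfsum_def dsum_def N_def by (simp add: sum_distrib_left atLeast0LessThan)
  have active: "\<nu> \<le> t - (c + real k) \<longleftrightarrow> k < N" for k
  proof -
    have "\<nu> \<le> t - (c + real k) \<longleftrightarrow> of_int (int k) \<le> (of_int m :: real)"
      unfolding t_def by simp
    also have "\<dots> \<longleftrightarrow> k < N"
      unfolding N_def of_int_le_iff by linarith
    finally show ?thesis .
  qed
  have "N \<le> M"
    unfolding N_def using assms by linarith
  have "(\<Sum>k<N. ffact (t - (c + real k + 1)) (\<nu> - 1) * g (c + real k) / Gamma \<nu>)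
      = (\<Sum>k<M. frac_kernel \<nu> (t - (c + real k)) * g (c + real k))"
  proof (rule sum.mono_neutral_cong_left)
    show "\<forall>k\<in>{..<M} - {..<N}. frac_kernel \<nu> (t - (c + real k)) * g (c + real k) = 0"
      using active unfolding frac_kernel_def by auto
    show "ffact (t - (c + real k + 1)) (\<nu> - 1) * g (c + real k) / Gamma \<nu>
        = frac_kernel \<nu> (t - (c + real k)) * g (c + real k)" if "k \<in> {..<N}" for k
      using that active[of k] unfolding frac_kernel_def by (simp add: algebra_simps)
  qed (use \<open>N \<le> M\<close> in auto)
  then show ?thesis
    using dsum_N unfolding t_def by simp
qed

text \<open>Dually, at \<open>u = c + r - \<nu>\<close> (\<open>r \<ge> 0\<close>) the right fractional sum ending at \<open>c+M-1\<close> is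
  the kernel sum over the same grid: the terms with \<open>q < r\<close> vanish.\<close>

lemma rfsum_grid:
  "rfsum (c + real M - 1) \<nu> f (c + real r - \<nu>)
     = (\<Sum>q<M. frac_kernel \<nu> (c + real q - (c + real r - \<nu>)) * f (c + real q))"
proof -
  define u where "u = c + real r - \<nu>"
  define T where "T q = ffact (c + real q - u - 1) (\<nu> - 1) * f (c + real q) / Gamma \<nu>" for q
  have "c + real M - 1 - (u + \<nu>) = of_int (int M - 1 - int r)"
    unfolding u_def by simp
  then have "\<lfloor>c + real M - 1 - (u + \<nu>)\<rfloor> = int M - 1 - int r"
    by (metis floor_of_int)
  then have "nat (\<lfloor>c + real M - 1 - (u + \<nu>)\<rfloor> + 1) = M - r"
    by simp
  then have "rfsum (c + real M - 1) \<nu> f u = (\<Sum>k<M - r. T (r + k))"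
    unfolding rfsum_def dsum_def T_def u_def
    by (simp add: sum_distrib_left atLeast0LessThan algebra_simps)
  also have "\<dots> = (\<Sum>q\<in>{r..<M}. T q)"
    using sum.atLeastLessThan_shift_0[of T r M] by (simp add: comp_def atLeast0LessThan)
  also have "\<dots> = (\<Sum>q<M. frac_kernel \<nu> (c + real q - u) * f (c + real q))"
    by (intro sum.mono_neutral_cong_left)
       (auto simp: frac_kernel_def T_def u_def algebra_simps)
  finally show ?thesis
    unfolding u_def .
qed

lemma lfdiff_grid:
  assumes "i < M"
  shows "lfdiff c \<alpha> n g (c + real i - \<alpha>)
       = (\<Sum>k<M. (fdiff ^^ n) (frac_kernel (real n - \<alpha>)) (c + real i - \<alpha> - (c + real k))
                  * g (c + real k))"
proof -
  define \<nu> where "\<nu> = real n - \<alpha>"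
  have "lfdiff c \<alpha> n g (c + real i - \<alpha>)
      = (fdiff ^^ n) (\<lambda>t. \<Sum>k<M. frac_kernel \<nu> (t - (c + real k)) * g (c + real k))
          (c + real i - \<alpha>)"
    unfolding lfdiff_def \<nu>_def[symmetric]
  proof (rule fdiff_pow_local)
    fix j assume "j \<le> n"
    have point: "c + real i - \<alpha> + real j = c + of_int (int i + int j - int n) + \<nu>"
      unfolding \<nu>_def by simp
    have "int i + int j - int n < int M"
      using assms \<open>j \<le> n\<close> by linarith
    then show "lfsum c \<nu> g (c + real i - \<alpha> + real j)
        = (\<Sum>k<M. frac_kernel \<nu> (c + real i - \<alpha> + real j - (c + real k)) * g (c + real k))"
      unfolding point by (rule lfsum_grid)
  qed
  then show ?thesis
    unfolding \<nu>_def by (simp only: fdiff_pow_sum fdiff_pow_translate)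
qed

lemma rfdiff_grid:
  shows "rfdiff (c + real M - 1) \<alpha> n f (c + real p + \<alpha>)
       = (\<Sum>q<M. (fdiff ^^ n) (frac_kernel (real n - \<alpha>)) (c + real q - (c + real p + \<alpha>))
                  * f (c + real q))"
proof -
  define \<nu> where "\<nu> = real n - \<alpha>"
  have "(bdiff ^^ n) (rfsum (c + real M - 1) \<nu> f) (c + real p + \<alpha>)
      = (bdiff ^^ n) (\<lambda>u. \<Sum>q<M. frac_kernel \<nu> (c + real q - u) * f (c + real q))
          (c + real p + \<alpha>)"
  proof (rule bdiff_pow_local)
    fix j assume "j \<le> n"
    then have point: "c + real p + \<alpha> - real j = c + real (p + n - j) - \<nu>"
      unfolding \<nu>_def by (simp add: of_nat_diff)
    show "rfsum (c + real M - 1) \<nu> f (c + real p + \<alpha> - real j)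
        = (\<Sum>q<M. frac_kernel \<nu> (c + real q - (c + real p + \<alpha> - real j)) * f (c + real q))"
      unfolding point by (rule rfsum_grid)
  qed
  then show ?thesis
    unfolding rfdiff_def \<nu>_def[symmetric]
    by (simp add: bdiff_pow_sum bdiff_pow_reflect sum_distrib_left mult.assoc)
qed

theorem proposition4p7:
  fixes \<alpha> a b :: real and n :: nat and f g :: "real \<Rightarrow> real"
  assumes "\<alpha> > 0" and "\<alpha> \<notin> \<int>"
    and "n = nat \<lfloor>\<alpha>\<rfloor> + 1"
    and "a < b" and "b - a \<in> \<int>"
  shows "dsum (a + 1) (b - 1) (\<lambda>s. f s * lfdiff (a + 1) \<alpha> n g (s - \<alpha>))
       = dsum (a + 1) (b - 1) (\<lambda>s. g s * rfdiff (b - 1) \<alpha> n f (s + \<alpha>))"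
proof -
  obtain z where z: "b - a = of_int z"
    using assms(5) Ints_cases by metis
  define M where "M = nat (z - 1)"
  define x where "x k = a + 1 + real k" for k
  define D where "D = (fdiff ^^ n) (frac_kernel (real n - \<alpha>))"
  have b_grid: "b - 1 = a + 1 + real M - 1"
    unfolding M_def using z assms(4) by simp
  have lfdiff_g: "lfdiff (a + 1) \<alpha> n g (x i - \<alpha>) = (\<Sum>k<M. D (x i - \<alpha> - x k) * g (x k))"
    if "i < M" for i
    using lfdiff_grid[OF that] unfolding x_def D_def .
  have rfdiff_f: "rfdiff (b - 1) \<alpha> n f (x k + \<alpha>) = (\<Sum>i<M. D (x i - \<alpha> - x k) * f (x i))" for k
    using rfdiff_grid[of "a + 1" M \<alpha> n f k] unfolding b_grid x_def D_def
    by (simp add: algebra_simps)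
  have "dsum (a + 1) (b - 1) (\<lambda>s. f s * lfdiff (a + 1) \<alpha> n g (s - \<alpha>))
      = (\<Sum>i<M. \<Sum>k<M. f (x i) * D (x i - \<alpha> - x k) * g (x k))"
    unfolding dsum_grid[of "a + 1" M, folded b_grid] x_def[symmetric]
    by (simp add: lfdiff_g sum_distrib_left mult.assoc)
  also have "\<dots> = (\<Sum>k<M. \<Sum>i<M. f (x i) * D (x i - \<alpha> - x k) * g (x k))"
    by (rule sum.swap)
  also have "\<dots> = dsum (a + 1) (b - 1) (\<lambda>s. g s * rfdiff (b - 1) \<alpha> n f (s + \<alpha>))"
    unfolding dsum_grid[of "a + 1" M, folded b_grid] x_def[symmetric]
    by (simp add: rfdiff_f sum_distrib_left mult_ac)
  finally show ?thesis .
qed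

end
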